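(* The group \(\mathcal{G}=\langle x,y,t \mid x^7, y^2, (xy)^3, [x,y]^4, t^2, [t^{x^2},yx^{-1}], [t,y], (yt^{x^2})^5, (xyx^2t^x)^5, (xt)^8\rangle\) is perfect.
   Context: Conventions: \(a^g=g^{-1}ag\) and \([a,b]=a^{-1}b^{-1}ab\). A group is perfect if it equals its commutator subgroup. *)

theory Defs
  imports "HOL-Algebra.Algebra"
begin

text \<open>Group given by a presentation on generators x, y, t.
  Words are lists of letters (g, b); b = False means g, b = True means g inverse.\<close>

datatype gen = GX | GY | GT

type_synonym word = "(gen \<times> bool) list"

definition ginv :: "word \<Rightarrow> word" where
  "ginv w = rev (map (\<lambda>(g, b). (g, \<not> b)) w)"

definition gpow :: "word \<Rightarrow> nat \<Rightarrow> word" where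
  "gpow w n = concat (replicate n w)"

text \<open>Conventions: a^g = g^-1 a g and [a,b] = a^-1 b^-1 a b.\<close>
definition gconj :: "word \<Rightarrow> word \<Rightarrow> word" where
  "gconj a g = ginv g @ a @ g"

definition gcomm :: "word \<Rightarrow> word \<Rightarrow> word" where
  "gcomm a b = ginv a @ ginv b @ a @ b"

definition wx :: word where "wx = [(GX, False)]"
definition wy :: word where "wy = [(GY, False)]"
definition wt :: word where "wt = [(GT, False)]"

definition relators :: "word set" where
  "relators = {
     gpow wx 7,
     gpow wy 2,
     gpow (wx @ wy) 3,
     gpow (gcomm wx wy) 4,
     gpow wt 2,
     gcomm (gconj wt (gpow wx 2)) (wy @ ginv wx),
     gcomm wt wy,
     gpow (wy @ gconj wt (gpow wx 2)) 5,
     gpow (wx @ wy @ gpow wx 2 @ gconj wt wx) 5,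
     gpow (wx @ wt) 8 }"

inductive geqv :: "word \<Rightarrow> word \<Rightarrow> bool" where
  geqv_refl: "geqv w w"
| geqv_sym: "geqv u v \<Longrightarrow> geqv v u"
| geqv_trans: "geqv u v \<Longrightarrow> geqv v w \<Longrightarrow> geqv u w"
| geqv_cancel: "geqv (u @ [(g, b), (g, \<not> b)] @ v) (u @ v)"
| geqv_rel: "r \<in> relators \<Longrightarrow> geqv (u @ r @ v) (u @ v)"

definition presG :: "word set monoid" where
  "presG = \<lparr> carrier = {{v. geqv w v} | w. True},
             monoid.mult = (\<lambda>A B. {w. \<exists>a\<in>A. \<exists>b\<in>B. geqv (a @ b) w}),
             one = {v. geqv [] v} \<rparr>"

end

theory Submission
  imports Defs
begin

text \<open>In an abelian quotient the relators reduce to \<open>x\<^sup>7 = y\<^sup>2 = (xy)\<^sup>3 = t\<^sup>2 = (yt)\<^sup>5 = 1\<close>: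
  then \<open>x\<^sup>6 = (xy)\<^sup>6 y\<^sup>-\<^sup>6 = 1\<close>, so \<open>x = 1\<close>, hence \<open>y\<^sup>3 = 1\<close> and \<open>y = 1\<close>, hence \<open>t\<^sup>5 = 1\<close> and
  \<open>t = 1\<close>. So every generator lies in the derived subgroup.\<close>

lemma (in group) eq_one_if_pow_coprime:
  assumes "a \<in> carrier G" "a [^] (m::nat) = \<one>" "a [^] (n::nat) = \<one>" "coprime m n"
  shows "a = \<one>"
proof -
  have "ord a dvd m" "ord a dvd n" using assms pow_eq_id by blast+
  then have "ord a = 1" using \<open>coprime m n\<close> by (metis coprime_common_divisor_nat)
  then show ?thesis using assms(1) ord_eq_1 by blast
qed

lemma (in comm_group) abelian_relations_force_trivial:
  assumes x: "x \<in> carrier G" and y: "y \<in> carrier G" and t: "t \<in> carrier G"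
    and x7: "x [^] (7::nat) = \<one>" and y2: "y [^] (2::nat) = \<one>"
    and xy3: "(x \<otimes> y) [^] (3::nat) = \<one>"
    and t2: "t [^] (2::nat) = \<one>" and yt5: "(y \<otimes> t) [^] (5::nat) = \<one>"
  shows "x = \<one> \<and> y = \<one> \<and> t = \<one>"
proof -
  have "y [^] (6::nat) = \<one>"
    using y2 y nat_pow_pow[of y 2 3] by simp
  moreover have "x [^] (6::nat) \<otimes> y [^] (6::nat) = (x \<otimes> y) [^] (3 * 2 :: nat)"
    using x y by (simp add: pow_mult_distrib m_comm)
  then have "x [^] (6::nat) \<otimes> y [^] (6::nat) = \<one>"
    using xy3 x y nat_pow_pow[of "x \<otimes> y" 3 2] by simp
  ultimately have "x [^] (6::nat) = \<one>" using x by simp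
  then have x1: "x = \<one>"
    using eq_one_if_pow_coprime[OF x x7] by (simp add: coprime_iff_gcd_eq_1 gcd_non_0_nat)
  then have y1: "y = \<one>"
    using eq_one_if_pow_coprime[OF y y2, of 3] xy3 y
    by (simp add: coprime_iff_gcd_eq_1 gcd_non_0_nat)
  then have "t = \<one>"
    using eq_one_if_pow_coprime[OF t t2, of 5] yt5 t
    by (simp add: coprime_iff_gcd_eq_1 gcd_non_0_nat)
  with x1 y1 show ?thesis by simp
qed

lemma geqv_append_context: "geqv u v \<Longrightarrow> geqv (p @ u @ q) (p @ v @ q)"
proof (induction rule: geqv.induct)
  case (geqv_refl w) then show ?case by (rule geqv.geqv_refl)
next
  case (geqv_sym u v) then show ?case by (metis geqv.geqv_sym)
next
  case (geqv_trans u v w) then show ?case by (metis geqv.geqv_trans)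
next
  case (geqv_cancel u g b v)
  then show ?case using geqv.geqv_cancel[of "p @ u" g b "v @ q"] by simp
next
  case (geqv_rel r u v)
  then show ?case using geqv.geqv_rel[of r "p @ u" "v @ q"] by simp
qed

lemma geqv_append: "geqv a a' \<Longrightarrow> geqv b b' \<Longrightarrow> geqv (a @ b) (a' @ b')"
  using geqv_append_context[of a a' "[]" b] geqv_append_context[of b b' a' "[]"]
  by (auto intro: geqv.geqv_trans)

lemma geqv_ginv_append: "geqv (ginv w @ w) []"
proof (induction w)
  case Nil then show ?case by (simp add: ginv_def geqv_refl)
next
  case (Cons a w)
  obtain g b where a: "a = (g, b)" by (cases a)
  have "geqv (ginv w @ [(g, \<not> b), (g, \<not> \<not> b)] @ w) (ginv w @ w)"
    by (rule geqv_cancel)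
  then have "geqv (ginv (a # w) @ a # w) (ginv w @ w)"
    by (simp add: a ginv_def)
  then show ?case using Cons by (rule geqv_trans)
qed

definition word_class :: "word \<Rightarrow> word set" where
  "word_class w = {v. geqv w v}"

lemma word_class_eq_iff: "word_class u = word_class v \<longleftrightarrow> geqv u v"
  unfolding word_class_def
  by (auto intro: geqv.geqv_trans geqv.geqv_sym geqv_refl)

lemma carrier_presG: "carrier presG = range word_class"
  by (auto simp: presG_def word_class_def)

lemma word_class_in_carrier [simp]: "word_class w \<in> carrier presG"
  by (simp add: carrier_presG)

lemma one_presG: "\<one>\<^bsub>presG\<^esub> = word_class []"
  by (simp add: presG_def word_class_def)

lemma word_class_append: "word_class (a @ b) = word_class a \<otimes>\<^bsub>presG\<^esub> word_class b"
  unfolding presG_def word_class_def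
  by (auto intro: geqv.geqv_trans geqv_append geqv_refl)

lemma group_presG: "group presG"
proof (rule groupI)
  fix x assume "x \<in> carrier presG"
  then obtain w where w: "x = word_class w" by (auto simp: carrier_presG)
  have "word_class (ginv w) \<otimes>\<^bsub>presG\<^esub> x = \<one>\<^bsub>presG\<^esub>"
    using geqv_ginv_append[of w]
    by (simp add: w one_presG word_class_append[symmetric] word_class_eq_iff)
  then show "\<exists>y\<in>carrier presG. y \<otimes>\<^bsub>presG\<^esub> x = \<one>\<^bsub>presG\<^esub>" by auto
qed (auto simp: carrier_presG one_presG word_class_append[symmetric])

interpretation presG: group presG
  by (rule group_presG)

lemma word_class_ginv: "word_class (ginv w) = inv\<^bsub>presG\<^esub> word_class w"
  using geqv_ginv_append[of w]
  by (intro presG.inv_equality[symmetric])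
     (simp_all add: one_presG word_class_append[symmetric] word_class_eq_iff)

lemma word_class_gpow: "word_class (gpow w n) = word_class w [^]\<^bsub>presG\<^esub> n"
proof (induction n)
  case 0 then show ?case by (simp add: gpow_def one_presG)
next
  case (Suc n)
  have "word_class (gpow w (Suc n)) = word_class w \<otimes>\<^bsub>presG\<^esub> word_class (gpow w n)"
    by (simp add: gpow_def word_class_append[symmetric])
  then show ?case using Suc presG.nat_pow_Suc2[of "word_class w" n] by simp
qed

lemma word_class_relator: "r \<in> relators \<Longrightarrow> word_class r = \<one>\<^bsub>presG\<^esub>"
  using geqv_rel[of r "[]" "[]"] by (simp add: one_presG word_class_eq_iff)

lemma subgroup_presG_eq_carrier:
  assumes H: "subgroup H presG"
    and "word_class wx \<in> H" "word_class wy \<in> H" "word_class wt \<in> H"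
  shows "H = carrier presG"
proof -
  have letter: "word_class [(g, b)] \<in> H" for g b
  proof -
    have generator: "word_class [(g, False)] \<in> H"
      using assms by (cases g) (simp_all add: wx_def wy_def wt_def)
    moreover have "word_class [(g, True)] = inv\<^bsub>presG\<^esub> word_class [(g, False)]"
      using word_class_ginv[of "[(g, False)]"] by (simp add: ginv_def)
    ultimately show ?thesis
      using subgroup.m_inv_closed[OF H] by (cases b) simp_all
  qed
  have "word_class w \<in> H" for w
  proof (induction w)
    case Nil then show ?case using subgroup.one_closed[OF H] by (simp add: one_presG)
  next
    case (Cons a w)
    then show ?case
      using letter subgroup.m_closed[OF H] word_class_append[of "[a]" w]
      by (cases a) simp
  qed
  then show ?thesis using subgroup.subset[OF H] by (auto simp: carrier_presG)
qed

lemma generators_in_kernel_of_abelian_image: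
  assumes "comm_group A" and "h \<in> hom presG A"
  shows "h (word_class wx) = \<one>\<^bsub>A\<^esub> \<and> h (word_class wy) = \<one>\<^bsub>A\<^esub> \<and> h (word_class wt) = \<one>\<^bsub>A\<^esub>"
proof -
  interpret A: comm_group A by (rule assms(1))
  interpret group_hom presG A h
    by (simp add: group_hom_def group_hom_axioms_def presG.group_axioms A.group_axioms assms(2))
  let ?x = "h (word_class wx)" and ?y = "h (word_class wy)" and ?t = "h (word_class wt)"
  have relator: "r \<in> relators \<Longrightarrow> h (word_class r) = \<one>\<^bsub>A\<^esub>" for r
    by (simp add: word_class_relator)
  have x7: "?x [^]\<^bsub>A\<^esub> (7::nat) = \<one>\<^bsub>A\<^esub>"
    using relator[of "gpow wx 7"] by (simp add: relators_def word_class_gpow hom_nat_pow)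
  have y2: "?y [^]\<^bsub>A\<^esub> (2::nat) = \<one>\<^bsub>A\<^esub>"
    using relator[of "gpow wy 2"] by (simp add: relators_def word_class_gpow hom_nat_pow)
  have xy3: "(?x \<otimes>\<^bsub>A\<^esub> ?y) [^]\<^bsub>A\<^esub> (3::nat) = \<one>\<^bsub>A\<^esub>"
    using relator[of "gpow (wx @ wy) 3"]
    by (simp add: relators_def word_class_gpow word_class_append hom_nat_pow)
  have t2: "?t [^]\<^bsub>A\<^esub> (2::nat) = \<one>\<^bsub>A\<^esub>"
    using relator[of "gpow wt 2"] by (simp add: relators_def word_class_gpow hom_nat_pow)
  have "inv\<^bsub>A\<^esub> (?x [^]\<^bsub>A\<^esub> (2::nat)) \<otimes>\<^bsub>A\<^esub> (?t \<otimes>\<^bsub>A\<^esub> ?x [^]\<^bsub>A\<^esub> (2::nat)) = ?t"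
    by (simp add: A.m_lcomm[symmetric])
  then have yt5: "(?y \<otimes>\<^bsub>A\<^esub> ?t) [^]\<^bsub>A\<^esub> (5::nat) = \<one>\<^bsub>A\<^esub>"
    using relator[of "gpow (wy @ gconj wt (gpow wx 2)) 5"]
    by (simp add: relators_def word_class_gpow word_class_append word_class_ginv gconj_def
        hom_nat_pow)
  show ?thesis
    using A.abelian_relations_force_trivial[OF _ _ _ x7 y2 xy3 t2 yt5] by simp
qed

theorem lemma5p2:
  shows "group presG \<and> derived presG (carrier presG) = carrier presG"
proof -
  define D where "D = derived presG (carrier presG)"
  interpret D: normal D presG
    unfolding D_def by (rule presG.derived_self_is_normal)
  have "D #>\<^bsub>presG\<^esub> word_class w = \<one>\<^bsub>presG Mod D\<^esub> \<Longrightarrow> word_class w \<in> D" for w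
    by (rule presG.coset_join1) (simp_all add: FactGroup_def D.subgroup_axioms)
  moreover have "comm_group (presG Mod D)"
    unfolding D_def by (rule presG.derived_quot_is_comm_group)
  ultimately have "word_class wx \<in> D" "word_class wy \<in> D" "word_class wt \<in> D"
    using generators_in_kernel_of_abelian_image[OF _ D.r_coset_hom_Mod] by auto
  then have "D = carrier presG"
    by (intro subgroup_presG_eq_carrier D.subgroup_axioms)
  then show ?thesis using group_presG D_def by simp
qed

end
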